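(* Let $m,n$ be positive even integers, and let $P,Q\in\mathbb{C}[z_1,\dots,z_d]$ be nonzero polynomials of the form \[ P(z)=\sum_{\alpha\in(2\mathbb{N})^d,\ |\alpha|\le m}c_\alpha z^\alpha,\qquad Q(z)=\sum_{\alpha\in(2\mathbb{N})^d,\ |\alpha|\le n}d_\alpha z^\alpha, \] where $2\mathbb{N}=\{0,2,4,\dots\}$ (so every variable appears only to even powers). Then \[ \Bigl(\tfrac{m+n}{2}\Bigr)!\;\|P\,Q\|_a\ge\|P\|_a\,\|Q\|_a . \]
   Context: For multi-indices $\alpha\in\mathbb{N}^d$ write $z^\alpha=z_1^{\alpha_1}\cdots z_d^{\alpha_d}$, $\alpha!=\alpha_1!\cdots\alpha_d!$, $|\alpha|=\sum\alpha_i$. The apolar inner product on $\mathbb{C}[z_1,\dots,z_d]$ is $\langle \sum c_\alpha z^\alpha,\sum d_\alpha z^\alpha\rangle_a=\sum_\alpha\alpha!\,c_\alpha\overline{d_\alpha}$, with norm $\|P\|_a=\sqrt{\langle P,P\rangle_a}$. *)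

theory Defs
  imports "HOL-Analysis.Analysis" "HOL-Library.Poly_Mapping"
begin

(* Multi-indices alpha in N^d: finitely supported maps nat =>0 nat (variable i <-> z_(i+1)).
   Polynomials: finitely supported coefficient maps (nat =>0 nat) =>0 complex;
   multiplication is the Poly_Mapping convolution, i.e. ordinary polynomial product. *)
type_synonym mpoly_c = "(nat \<Rightarrow>\<^sub>0 nat) \<Rightarrow>\<^sub>0 complex"

definition mi_fact :: "(nat \<Rightarrow>\<^sub>0 nat) \<Rightarrow> nat" where
  "mi_fact \<alpha> = (\<Prod>i\<in>Poly_Mapping.keys \<alpha>. fact (Poly_Mapping.lookup \<alpha> i))"

definition mi_deg :: "(nat \<Rightarrow>\<^sub>0 nat) \<Rightarrow> nat" where
  "mi_deg \<alpha> = (\<Sum>i\<in>Poly_Mapping.keys \<alpha>. Poly_Mapping.lookup \<alpha> i)"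

definition apolar_inner :: "mpoly_c \<Rightarrow> mpoly_c \<Rightarrow> complex" where
  "apolar_inner P Q = (\<Sum>\<alpha>\<in>Poly_Mapping.keys P \<union> Poly_Mapping.keys Q.
      of_nat (mi_fact \<alpha>) * Poly_Mapping.lookup P \<alpha> * cnj (Poly_Mapping.lookup Q \<alpha>))"

definition apolar_norm :: "mpoly_c \<Rightarrow> real" where
  "apolar_norm P = sqrt (Re (apolar_inner P P))"

definition even_form :: "nat \<Rightarrow> nat \<Rightarrow> mpoly_c \<Rightarrow> bool" where
  "even_form d m P \<longleftrightarrow> (\<forall>\<alpha>\<in>Poly_Mapping.keys P. Poly_Mapping.keys \<alpha> \<subseteq> {..<d} \<and> mi_deg \<alpha> \<le> m
      \<and> (\<forall>i. even (Poly_Mapping.lookup \<alpha> i)))"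

end

theory Submission
  imports Defs "HOL-Library.Function_Algebras"
begin

text \<open>Homogenise \<open>P\<close> and \<open>Q\<close> with a new variable that enters only through its square, i.e. give each
  exponent \<open>\<alpha>\<close> of \<open>P\<close> the extra coordinate \<open>(m - |\<alpha>|)/2\<close>. The resulting exponents satisfy
  \<open>x\<^sub>1 + \<dots> + x\<^sub>d + 2 x\<^sub>d\<^sub>+\<^sub>1 = m\<close>, so they form an antichain. For \<open>F\<close> supported on an antichain, the
  identity \<open>\<parallel>F G\<parallel>\<^sup>2 = \<Sum>\<^sub>\<alpha>\<^sub>,\<^sub>\<beta> \<bar>\<langle>\<partial>\<^sup>\<beta> G, \<partial>\<^sup>\<alpha> F\<rangle>\<bar>\<^sup>2 / (\<alpha>! \<beta>!)\<close> of Beauzamy, Bombieri, Enflo and Montgomery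
  gives \<open>\<parallel>F\<parallel>\<^sup>2 \<parallel>G\<parallel>\<^sup>2 \<le> \<parallel>F G\<parallel>\<^sup>2\<close> from the terms with \<open>F\<^sub>\<alpha> \<noteq> 0\<close> alone. Homogenising can only increase
  apolar norms, and \<open>F G\<close> is the homogenisation of \<open>P Q\<close>, whose apolar norm it exceeds by at most
  the factor \<open>((m + n)/2)!\<close>. This yields \<open>\<parallel>P\<parallel>\<^sup>2 \<parallel>Q\<parallel>\<^sup>2 \<le> ((m + n)/2)! \<parallel>P Q\<parallel>\<^sup>2\<close>, which is stronger than
  the claim; only the parity of the total degrees is needed.\<close>

text \<open>Multi-indices are plain functions, so that \<open>+\<close> and \<open>\<le>\<close> act pointwise; finiteness is
  recovered by summing over the boxes \<open>index_box D M\<close>.\<close>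
type_synonym mindex = "nat \<Rightarrow> nat"

definition index_box :: "nat \<Rightarrow> nat \<Rightarrow> mindex set" where
  "index_box D M = {x. (\<forall>i<D. x i \<le> M) \<and> (\<forall>i\<ge>D. x i = 0)}"

definition mfact :: "nat \<Rightarrow> mindex \<Rightarrow> real" where
  "mfact D x = (\<Prod>i<D. fact (x i))"

definition apolar_sq_on :: "nat \<Rightarrow> mindex set \<Rightarrow> (mindex \<Rightarrow> complex) \<Rightarrow> real" where
  "apolar_sq_on D A f = (\<Sum>x\<in>A. mfact D x * (cmod (f x))\<^sup>2)"

lemma index_box_0: "index_box 0 M = {0}"
  by (auto simp: index_box_def)

lemma index_box_Suc: "index_box (Suc D) M = (\<lambda>(x, a). x(D := a)) ` (index_box D M \<times> {..M})"
proof (intro set_eqI iffI)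
  fix y assume y: "y \<in> index_box (Suc D) M"
  then have "(y(D := 0), y D) \<in> index_box D M \<times> {..M}"
    by (auto simp: index_box_def)
  moreover have "y = (\<lambda>(x, a). x(D := a)) (y(D := 0), y D)" by simp
  ultimately show "y \<in> (\<lambda>(x, a). x(D := a)) ` (index_box D M \<times> {..M})" by blast
qed (auto simp: index_box_def less_Suc_eq)

lemma inj_on_index_box_upd: "inj_on (\<lambda>(x, a). x(D := a)) (index_box D M \<times> {..M})"
proof (rule inj_onI, clarsimp)
  fix x a x' a' assume box: "x \<in> index_box D M" "x' \<in> index_box D M" and eq: "x(D := a) = x'(D := a')"
  have "x D = x' D" using box by (simp add: index_box_def)
  then show "x = x' \<and> a = a'" using eq by (metis fun_upd_idem_iff fun_upd_upd fun_upd_same)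
qed

lemma finite_index_box [simp]: "finite (index_box D M)"
  by (induction D) (simp_all add: index_box_0 index_box_Suc)

lemma zero_in_index_box [simp]: "0 \<in> index_box D M"
  by (simp add: index_box_def)

lemma add_in_index_box: "x \<in> index_box D M \<Longrightarrow> y \<in> index_box D M \<Longrightarrow> x + y \<in> index_box D (2 * M)"
  by (auto simp: index_box_def) (metis add_mono mult_2)

lemma index_box_mono: "M \<le> N \<Longrightarrow> index_box D M \<subseteq> index_box D N"
  by (auto simp: index_box_def intro: order.trans)

lemma sum_prod_index_box:
  fixes \<phi> :: "nat \<Rightarrow> nat \<Rightarrow> 'a::comm_semiring_1"
  shows "(\<Sum>x\<in>index_box D M. \<Prod>i<D. \<phi> i (x i)) = (\<Prod>i<D. \<Sum>a\<le>M. \<phi> i a)"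
proof (induction D)
  case 0 then show ?case by (simp add: index_box_0)
next
  case (Suc D)
  have "(\<Sum>x\<in>index_box (Suc D) M. \<Prod>i<Suc D. \<phi> i (x i))
      = (\<Sum>(x, a)\<in>index_box D M \<times> {..M}. \<Prod>i<Suc D. \<phi> i ((x(D := a)) i))"
    unfolding index_box_Suc by (subst sum.reindex[OF inj_on_index_box_upd]) (simp add: case_prod_beta)
  also have "\<dots> = (\<Sum>x\<in>index_box D M. \<Sum>a\<le>M. (\<Prod>i<D. \<phi> i (x i)) * \<phi> D a)"
    unfolding sum.cartesian_product
    by (intro sum.cong refl) (auto simp: lessThan_Suc mult.commute intro!: prod.cong)
  also have "\<dots> = (\<Sum>x\<in>index_box D M. \<Prod>i<D. \<phi> i (x i)) * (\<Sum>a\<le>M. \<phi> D a)"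
    by (simp add: sum_product)
  finally show ?case using Suc by (simp add: lessThan_Suc mult.commute)
qed

lemma mfact_pos: "mfact D x > 0"
  unfolding mfact_def by (rule prod_pos) auto

lemma mfact_cong: "(\<And>i. i < D \<Longrightarrow> x i = y i) \<Longrightarrow> mfact D x = mfact D y"
  unfolding mfact_def by (rule prod.cong) auto

lemma mfact_0 [simp]: "mfact D 0 = 1"
  by (simp add: mfact_def)

lemma apolar_sq_on_nonneg: "apolar_sq_on D A f \<ge> 0"
  unfolding apolar_sq_on_def by (intro sum_nonneg mult_nonneg_nonneg less_imp_le[OF mfact_pos]) auto

lemma fact_quotient_eq_binomials:
  fixes x y x' y' a :: nat
  assumes eq: "x + y = x' + y'" and "a \<le> x"
  shows "(if a \<le> x' \<and> x' \<le> a + y then fact x * fact y * fact x' * fact y' /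
            (fact a * fact (a + y - x') * fact (x' - a) * fact (x - a)) else (0::real))
       = fact x * fact y * real ((x' choose a) * (y' choose (x - a)))"
proof (cases "a \<le> x' \<and> x' \<le> a + y")
  case True
  have "x - a \<le> y'" and "y' - (x - a) = a + y - x'" using True eq \<open>a \<le> x\<close> by linarith+
  then have y: "real (y' choose (x - a)) = fact y' / (fact (x - a) * fact (a + y - x'))"
    using binomial_fact by metis
  have x: "real (x' choose a) = fact x' / (fact a * fact (x' - a))"
    using True binomial_fact by blast
  show ?thesis using True by (simp add: x y field_simps)
next
  case False
  then have "x' < a \<or> y' < x - a" using eq \<open>a \<le> x\<close> by linarith
  then show ?thesis using False by auto
qed

text \<open>Coordinatewise form of Vandermonde's identity \<open>\<Sum>\<^sub>a (x' choose a)(y' choose (x - a)) = (x + y choose x)\<close>.\<close>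
lemma sum_fact_quotients:
  fixes x y x' y' M :: nat
  assumes eq: "x + y = x' + y'" and "x \<le> M"
  shows "(\<Sum>a\<le>M. if a \<le> x \<and> a \<le> x' \<and> x' \<le> a + y then fact x * fact y * fact x' * fact y' /
            (fact a * fact (a + y - x') * fact (x' - a) * fact (x - a)) else (0::real))
       = fact (x + y)"
proof -
  have "(\<Sum>a\<le>M. if a \<le> x \<and> a \<le> x' \<and> x' \<le> a + y then fact x * fact y * fact x' * fact y' /
            (fact a * fact (a + y - x') * fact (x' - a) * fact (x - a)) else (0::real))
     = (\<Sum>a\<le>x. if a \<le> x' \<and> x' \<le> a + y then fact x * fact y * fact x' * fact y' /
            (fact a * fact (a + y - x') * fact (x' - a) * fact (x - a)) else (0::real))"
    using \<open>x \<le> M\<close> by (intro sum.mono_neutral_cong_right) auto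
  also have "\<dots> = fact x * fact y * real (\<Sum>a\<le>x. (x' choose a) * (y' choose (x - a)))"
    by (simp add: fact_quotient_eq_binomials[OF eq] sum_distrib_left)
  also have "\<dots> = fact x * fact y * real ((x + y) choose x)"
    by (simp only: vandermonde eq)
  also have "\<dots> = fact (x + y)"
    using binomial_fact[of x "x + y", where 'a = real] by (simp add: field_simps)
  finally show ?thesis .
qed

type_synonym mquad = "mindex \<times> mindex \<times> mindex \<times> mindex"

abbreviation quad_box :: "nat \<Rightarrow> nat \<Rightarrow> mquad set" where
  "quad_box D M \<equiv> index_box D M \<times> index_box D M \<times> index_box D M \<times> index_box D M"

definition box_conv :: "nat \<Rightarrow> nat \<Rightarrow> (mindex \<Rightarrow> complex) \<Rightarrow> (mindex \<Rightarrow> complex) \<Rightarrow> mindex \<Rightarrow> complex" where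
  "box_conv D M f g \<gamma> = (\<Sum>a\<in>index_box D M. \<Sum>b\<in>index_box D M. if a + b = \<gamma> then f a * g b else 0)"

text \<open>\<open>gram_entry D M f g \<alpha> \<beta>\<close> is the apolar pairing of \<open>\<partial>\<^sup>\<beta> g\<close> with \<open>\<partial>\<^sup>\<alpha> f\<close>.\<close>
definition gram_entry :: "nat \<Rightarrow> nat \<Rightarrow> (mindex \<Rightarrow> complex) \<Rightarrow> (mindex \<Rightarrow> complex) \<Rightarrow> mindex \<Rightarrow> mindex \<Rightarrow> complex" where
  "gram_entry D M f g \<alpha> \<beta> = (\<Sum>r\<in>index_box D M. cnj (f (\<alpha> + r)) * g (\<beta> + r) *
       of_real (mfact D (\<alpha> + r) * mfact D (\<beta> + r) / mfact D r))"

definition quad_coeff :: "(mindex \<Rightarrow> complex) \<Rightarrow> (mindex \<Rightarrow> complex) \<Rightarrow> mquad \<Rightarrow> complex" where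
  "quad_coeff f g = (\<lambda>(x, y, x', y'). f x * g y * cnj (f x') * cnj (g y'))"

definition diagonal_weight :: "nat \<Rightarrow> mquad \<Rightarrow> real" where
  "diagonal_weight D = (\<lambda>(x, y, x', y'). if x + y = x' + y' then mfact D (x + y) else 0)"

definition shift_quad :: "mquad \<Rightarrow> mquad" where
  "shift_quad = (\<lambda>(\<alpha>, \<beta>, r, r'). (\<alpha> + r', \<beta> + r, \<alpha> + r, \<beta> + r'))"

definition shift_weight :: "nat \<Rightarrow> mquad \<Rightarrow> real" where
  "shift_weight D = (\<lambda>(\<alpha>, \<beta>, r, r').
     mfact D (\<alpha> + r') * mfact D (\<beta> + r) * mfact D (\<alpha> + r) * mfact D (\<beta> + r') /
     (mfact D \<alpha> * mfact D \<beta> * mfact D r * mfact D r'))"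

lemma sum_quad_box:
  "(\<Sum>k\<in>A \<times> B \<times> C \<times> E. h k) = (\<Sum>x\<in>A. \<Sum>y\<in>B. \<Sum>x'\<in>C. \<Sum>y'\<in>E. h (x, y, x', y'))"
  by (simp add: sum.cartesian_product)

lemma apolar_sq_box_conv_expand:
  "(\<Sum>\<gamma>\<in>index_box D (2 * M). of_real (mfact D \<gamma>) * box_conv D M f g \<gamma> * cnj (box_conv D M f g \<gamma>))
     = (\<Sum>k\<in>quad_box D M. quad_coeff f g k * of_real (diagonal_weight D k))"
proof -
  let ?B = "index_box D M" and ?B2 = "index_box D (2 * M)"
  have sq: "box_conv D M f g \<gamma> * cnj (box_conv D M f g \<gamma>) =
     (\<Sum>x\<in>?B. \<Sum>y\<in>?B. \<Sum>x'\<in>?B. \<Sum>y'\<in>?B.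
        if x + y = \<gamma> \<and> x' + y' = \<gamma> then quad_coeff f g (x, y, x', y') else 0)" for \<gamma>
    apply (subst mult.commute)
    unfolding box_conv_def cnj_sum sum_distrib_left sum_distrib_right
    by (intro sum.cong refl) (auto simp: quad_coeff_def mult_ac)
  have diag: "(\<Sum>\<gamma>\<in>?B2. if x + y = \<gamma> \<and> x' + y' = \<gamma> then of_real (mfact D \<gamma>) * quad_coeff f g (x, y, x', y') else 0)
       = quad_coeff f g (x, y, x', y') * of_real (diagonal_weight D (x, y, x', y'))"
    if "x \<in> ?B" "y \<in> ?B" for x y x' y'
  proof -
    have "(\<Sum>\<gamma>\<in>?B2. if x + y = \<gamma> \<and> x' + y' = \<gamma> then of_real (mfact D \<gamma>) * quad_coeff f g (x, y, x', y') else 0)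
       = (\<Sum>\<gamma>\<in>?B2. if x + y = \<gamma> then
            (if x' + y' = x + y then of_real (mfact D (x + y)) * quad_coeff f g (x, y, x', y') else 0) else 0)"
      by (intro sum.cong refl) auto
    also have "\<dots> = quad_coeff f g (x, y, x', y') * of_real (diagonal_weight D (x, y, x', y'))"
      using add_in_index_box[OF that] by (auto simp: diagonal_weight_def)
    finally show ?thesis .
  qed
  have "(\<Sum>\<gamma>\<in>?B2. of_real (mfact D \<gamma>) * box_conv D M f g \<gamma> * cnj (box_conv D M f g \<gamma>))
     = (\<Sum>\<gamma>\<in>?B2. \<Sum>x\<in>?B. \<Sum>y\<in>?B. \<Sum>x'\<in>?B. \<Sum>y'\<in>?B.
          if x + y = \<gamma> \<and> x' + y' = \<gamma> then of_real (mfact D \<gamma>) * quad_coeff f g (x, y, x', y') else 0)"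
    by (simp only: mult.assoc sq sum_distrib_left) (intro sum.cong refl, simp)
  also have "\<dots> = (\<Sum>x\<in>?B. \<Sum>y\<in>?B. \<Sum>x'\<in>?B. \<Sum>y'\<in>?B. \<Sum>\<gamma>\<in>?B2.
          if x + y = \<gamma> \<and> x' + y' = \<gamma> then of_real (mfact D \<gamma>) * quad_coeff f g (x, y, x', y') else 0)"
    by (subst sum.swap, rule sum.cong[OF refl])+ (rule refl)
  also have "\<dots> = (\<Sum>k\<in>quad_box D M. quad_coeff f g k * of_real (diagonal_weight D k))"
    unfolding sum_quad_box by (intro sum.cong refl diag)
  finally show ?thesis .
qed

lemma gram_entries_expand:
  "(\<Sum>\<alpha>\<in>index_box D M. \<Sum>\<beta>\<in>index_box D M.
       of_real (1 / (mfact D \<alpha> * mfact D \<beta>)) * (gram_entry D M f g \<alpha> \<beta> * cnj (gram_entry D M f g \<alpha> \<beta>)))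
   = (\<Sum>t\<in>quad_box D M. quad_coeff f g (shift_quad t) * of_real (shift_weight D t))"
proof -
  let ?B = "index_box D M"
  have sq: "gram_entry D M f g \<alpha> \<beta> * cnj (gram_entry D M f g \<alpha> \<beta>) =
     (\<Sum>r\<in>?B. \<Sum>r'\<in>?B. cnj (f (\<alpha> + r)) * g (\<beta> + r) * f (\<alpha> + r') * cnj (g (\<beta> + r')) *
        of_real (mfact D (\<alpha> + r) * mfact D (\<beta> + r) / mfact D r *
                 (mfact D (\<alpha> + r') * mfact D (\<beta> + r') / mfact D r')))" for \<alpha> \<beta>
    apply (subst mult.commute)
    unfolding gram_entry_def cnj_sum sum_distrib_left sum_distrib_right
    by (intro sum.cong refl) (simp add: mult_ac)
  have summand: "of_real (1 / (mfact D \<alpha> * mfact D \<beta>)) *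
      (cnj (f (\<alpha> + r)) * g (\<beta> + r) * f (\<alpha> + r') * cnj (g (\<beta> + r')) *
        of_real (mfact D (\<alpha> + r) * mfact D (\<beta> + r) / mfact D r * (mfact D (\<alpha> + r') * mfact D (\<beta> + r') / mfact D r')))
      = quad_coeff f g (shift_quad (\<alpha>, \<beta>, r, r')) * of_real (shift_weight D (\<alpha>, \<beta>, r, r'))" for \<alpha> \<beta> r r'
  proof -
    have w: "1 / (mfact D \<alpha> * mfact D \<beta>) * (mfact D (\<alpha> + r) * mfact D (\<beta> + r) / mfact D r *
               (mfact D (\<alpha> + r') * mfact D (\<beta> + r') / mfact D r')) = shift_weight D (\<alpha>, \<beta>, r, r')"
      unfolding shift_weight_def by (simp add: field_simps)
    have q: "quad_coeff f g (shift_quad (\<alpha>, \<beta>, r, r')) = cnj (f (\<alpha> + r)) * g (\<beta> + r) * f (\<alpha> + r') * cnj (g (\<beta> + r'))"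
      unfolding quad_coeff_def shift_quad_def by (simp add: mult_ac)
    show ?thesis unfolding q w[symmetric] of_real_mult by (simp only: mult_ac)
  qed
  show ?thesis
    unfolding sq sum_distrib_left summand sum_quad_box ..
qed

lemma shift_quad_fiber:
  fixes x y x' y' :: mindex
  assumes eq: "x + y = x' + y'"
    and box: "x \<in> index_box D M" "y \<in> index_box D M" "x' \<in> index_box D M" "y' \<in> index_box D M"
  defines "A \<equiv> {\<alpha> \<in> index_box D M. \<forall>i<D. \<alpha> i \<le> x i \<and> \<alpha> i \<le> x' i \<and> x' i \<le> \<alpha> i + y i}"
    and "\<phi> \<equiv> \<lambda>\<alpha>. (\<alpha>, \<lambda>i. \<alpha> i + y i - x' i, \<lambda>i. x' i - \<alpha> i, \<lambda>i. x i - \<alpha> i)"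
  shows "{t \<in> quad_box D M. shift_quad t = (x, y, x', y')} = \<phi> ` A" and "inj_on \<phi> A"
proof -
  have eqi: "x i + y i = x' i + y' i" for i using fun_cong[OF eq, of i] by simp
  show "inj_on \<phi> A" unfolding \<phi>_def by (rule inj_onI) simp
  show "{t \<in> quad_box D M. shift_quad t = (x, y, x', y')} = \<phi> ` A"
  proof (intro set_eqI iffI)
    fix t assume t: "t \<in> {t \<in> quad_box D M. shift_quad t = (x, y, x', y')}"
    obtain \<alpha> \<beta> r r' where t_def: "t = (\<alpha>, \<beta>, r, r')" by (cases t)
    with t have "\<alpha> \<in> index_box D M" and xy: "x = \<alpha> + r'" "y = \<beta> + r" "x' = \<alpha> + r" "y' = \<beta> + r'"
      by (auto simp: shift_quad_def)
    then have "\<alpha> \<in> A" unfolding A_def by auto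
    moreover have "t = \<phi> \<alpha>" unfolding t_def \<phi>_def xy by (auto simp: fun_eq_iff)
    ultimately show "t \<in> \<phi> ` A" by blast
  next
    fix t assume "t \<in> \<phi> ` A"
    then obtain \<alpha> where "\<alpha> \<in> A" and t: "t = \<phi> \<alpha>" by blast
    then have \<alpha>: "\<alpha> \<in> index_box D M" and le: "\<And>i. i < D \<Longrightarrow> \<alpha> i \<le> x i \<and> \<alpha> i \<le> x' i \<and> x' i \<le> \<alpha> i + y i"
      unfolding A_def by auto
    have out: "\<And>i. D \<le> i \<Longrightarrow> x i = 0 \<and> y i = 0 \<and> x' i = 0 \<and> y' i = 0 \<and> \<alpha> i = 0"
      using box \<alpha> by (auto simp: index_box_def)
    have "(\<lambda>i. x i - \<alpha> i) \<in> index_box D M" "(\<lambda>i. x' i - \<alpha> i) \<in> index_box D M"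
      using box out by (auto simp: index_box_def intro: le_trans[OF diff_le_self])
    moreover have "(\<lambda>i. \<alpha> i + y i - x' i) \<in> index_box D M"
      using box out le by (fastforce simp: index_box_def)
    moreover have "\<alpha> i + (x i - \<alpha> i) = x i \<and> \<alpha> i + y i - x' i + (x' i - \<alpha> i) = y i \<and>
        \<alpha> i + (x' i - \<alpha> i) = x' i \<and> \<alpha> i + y i - x' i + (x i - \<alpha> i) = y' i" for i
      using le[of i] out[of i] eqi[of i] by (cases "i < D") auto
    ultimately show "t \<in> {t \<in> quad_box D M. shift_quad t = (x, y, x', y')}"
      using \<alpha> unfolding t \<phi>_def shift_quad_def by (simp add: fun_eq_iff)
  qed
qed

lemma shift_weight_eq_prod:
  fixes x y x' y' \<alpha> :: mindex
  assumes eq: "x + y = x' + y'" and le: "\<And>i. i < D \<Longrightarrow> \<alpha> i \<le> x i \<and> \<alpha> i \<le> x' i \<and> x' i \<le> \<alpha> i + y i"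
  shows "shift_weight D (\<alpha>, \<lambda>i. \<alpha> i + y i - x' i, \<lambda>i. x' i - \<alpha> i, \<lambda>i. x i - \<alpha> i)
     = (\<Prod>i<D. fact (x i) * fact (y i) * fact (x' i) * fact (y' i) /
          (fact (\<alpha> i) * fact (\<alpha> i + y i - x' i) * fact (x' i - \<alpha> i) * fact (x i - \<alpha> i)))"
proof -
  have eqi: "x i + y i = x' i + y' i" for i using fun_cong[OF eq, of i] by simp
  have "mfact D (\<alpha> + (\<lambda>i. x i - \<alpha> i)) = mfact D x"
    and "mfact D ((\<lambda>i. \<alpha> i + y i - x' i) + (\<lambda>i. x' i - \<alpha> i)) = mfact D y"
    and "mfact D (\<alpha> + (\<lambda>i. x' i - \<alpha> i)) = mfact D x'"
    and "mfact D ((\<lambda>i. \<alpha> i + y i - x' i) + (\<lambda>i. x i - \<alpha> i)) = mfact D y'"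
    using le eqi by (auto intro!: mfact_cong simp: add.commute[of "y _"] diff_add_eq_diff_diff_swap)
  then have "shift_weight D (\<alpha>, \<lambda>i. \<alpha> i + y i - x' i, \<lambda>i. x' i - \<alpha> i, \<lambda>i. x i - \<alpha> i)
      = mfact D x * mfact D y * mfact D x' * mfact D y' /
        (mfact D \<alpha> * mfact D (\<lambda>i. \<alpha> i + y i - x' i) * mfact D (\<lambda>i. x' i - \<alpha> i) * mfact D (\<lambda>i. x i - \<alpha> i))"
    unfolding shift_weight_def by simp
  then show ?thesis
    unfolding mfact_def by (simp add: prod.distrib[symmetric] prod_dividef[symmetric])
qed

text \<open>The shift weights over a fibre of \<open>shift_quad\<close> factor coordinatewise, and each factor is
  summed by Vandermonde's identity.\<close>
lemma sum_shift_weight_fiber: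
  fixes x y x' y' :: mindex
  assumes eq: "x + y = x' + y'"
    and box: "x \<in> index_box D M" "y \<in> index_box D M" "x' \<in> index_box D M" "y' \<in> index_box D M"
  shows "(\<Sum>t\<in>{t \<in> quad_box D M. shift_quad t = (x, y, x', y')}. shift_weight D t) = mfact D (x + y)"
proof -
  define A where "A \<equiv> {\<alpha> \<in> index_box D M. \<forall>i<D. \<alpha> i \<le> x i \<and> \<alpha> i \<le> x' i \<and> x' i \<le> \<alpha> i + y i}"
  define \<phi> where "\<phi> \<equiv> \<lambda>\<alpha>::mindex. (\<alpha>, \<lambda>i. \<alpha> i + y i - x' i, \<lambda>i. x' i - \<alpha> i, \<lambda>i. x i - \<alpha> i)"
  define g where "g i a = (if a \<le> x i \<and> a \<le> x' i \<and> x' i \<le> a + y i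
      then fact (x i) * fact (y i) * fact (x' i) * fact (y' i) /
           (fact a * fact (a + y i - x' i) * fact (x' i - a) * fact (x i - a)) else (0::real))" for i a
  have eqi: "x i + y i = x' i + y' i" for i using fun_cong[OF eq, of i] by simp
  have weight: "shift_weight D (\<phi> \<alpha>) = (\<Prod>i<D. g i (\<alpha> i))" if "\<alpha> \<in> A" for \<alpha>
    using that unfolding A_def \<phi>_def g_def by (simp add: shift_weight_eq_prod[OF eq])
  have "(\<Sum>t\<in>{t \<in> quad_box D M. shift_quad t = (x, y, x', y')}. shift_weight D t) = (\<Sum>\<alpha>\<in>A. shift_weight D (\<phi> \<alpha>))"
    using shift_quad_fiber[OF eq box] unfolding A_def \<phi>_def by (simp add: sum.reindex)
  also have "\<dots> = (\<Sum>\<alpha>\<in>index_box D M. \<Prod>i<D. g i (\<alpha> i))"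
  proof (rule sum.mono_neutral_cong_left)
    show "\<forall>\<alpha>\<in>index_box D M - A. (\<Prod>i<D. g i (\<alpha> i)) = 0"
      unfolding A_def g_def by (auto intro: prod_zero)
  qed (auto simp: A_def weight)
  also have "\<dots> = (\<Prod>i<D. \<Sum>a\<le>M. g i a)" by (rule sum_prod_index_box)
  also have "\<dots> = (\<Prod>i<D. fact (x i + y i))"
    using box(1) unfolding g_def by (intro prod.cong refl sum_fact_quotients[OF eqi]) (auto simp: index_box_def)
  also have "\<dots> = mfact D (x + y)" by (simp add: mfact_def)
  finally show ?thesis .
qed

lemma sum_shift_quad_eq_diagonal:
  assumes f: "\<And>x. f x \<noteq> 0 \<Longrightarrow> x \<in> index_box D M" and g: "\<And>x. g x \<noteq> 0 \<Longrightarrow> x \<in> index_box D M"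
  shows "(\<Sum>t\<in>quad_box D M. quad_coeff f g (shift_quad t) * of_real (shift_weight D t))
       = (\<Sum>k\<in>quad_box D M. quad_coeff f g k * of_real (diagonal_weight D k))"
proof -
  let ?T = "quad_box D (2 * M)"
  let ?fiber = "\<lambda>k. {t \<in> quad_box D M. shift_quad t = k}"
  have "shift_quad ` quad_box D M \<subseteq> ?T" by (auto simp: shift_quad_def add_in_index_box)
  then have "(\<Sum>t\<in>quad_box D M. quad_coeff f g (shift_quad t) * of_real (shift_weight D t))
      = (\<Sum>k\<in>?T. quad_coeff f g k * of_real (\<Sum>t\<in>?fiber k. shift_weight D t))"
    by (subst sum.group[symmetric, where g = shift_quad and T = ?T])
       (auto simp: sum_distrib_left of_real_sum intro!: sum.cong)
  also have "\<dots> = (\<Sum>k\<in>quad_box D M. quad_coeff f g k * of_real (\<Sum>t\<in>?fiber k. shift_weight D t))"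
  proof (rule sum.mono_neutral_right)
    show "quad_box D M \<subseteq> ?T" using index_box_mono[of M "2 * M" D] by auto
    show "\<forall>k\<in>?T - quad_box D M. quad_coeff f g k * of_real (\<Sum>t\<in>?fiber k. shift_weight D t) = 0"
      using f g by (auto simp: quad_coeff_def)
  qed simp
  also have "\<dots> = (\<Sum>k\<in>quad_box D M. quad_coeff f g k * of_real (diagonal_weight D k))"
  proof (intro sum.cong refl)
    fix k assume "k \<in> quad_box D M"
    then obtain x y x' y' where k: "k = (x, y, x', y')" and
      box: "x \<in> index_box D M" "y \<in> index_box D M" "x' \<in> index_box D M" "y' \<in> index_box D M"
      by (cases k) auto
    show "quad_coeff f g k * of_real (\<Sum>t\<in>?fiber k. shift_weight D t) = quad_coeff f g k * of_real (diagonal_weight D k)"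
    proof (cases "x + y = x' + y'")
      case True
      then show ?thesis unfolding k diagonal_weight_def using sum_shift_weight_fiber[OF True box] by simp
    next
      case False
      then have empty: "?fiber (x, y, x', y') = {}" by (auto simp: shift_quad_def add.commute add.left_commute)
      show ?thesis unfolding k diagonal_weight_def empty using False by simp
    qed
  qed
  finally show ?thesis .
qed

text \<open>The identity of Beauzamy, Bombieri, Enflo and Montgomery: both sides expand into the same quartic
  sum in the coefficients after the substitution \<open>shift_quad\<close>.\<close>
lemma apolar_sq_box_conv_eq_gram:
  assumes f: "\<And>x. f x \<noteq> 0 \<Longrightarrow> x \<in> index_box D M" and g: "\<And>x. g x \<noteq> 0 \<Longrightarrow> x \<in> index_box D M"
  shows "apolar_sq_on D (index_box D (2 * M)) (box_conv D M f g)
       = (\<Sum>\<alpha>\<in>index_box D M. \<Sum>\<beta>\<in>index_box D M. (cmod (gram_entry D M f g \<alpha> \<beta>))\<^sup>2 / (mfact D \<alpha> * mfact D \<beta>))"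
proof -
  have "complex_of_real (apolar_sq_on D (index_box D (2 * M)) (box_conv D M f g))
      = (\<Sum>\<gamma>\<in>index_box D (2 * M). of_real (mfact D \<gamma>) * box_conv D M f g \<gamma> * cnj (box_conv D M f g \<gamma>))"
    by (simp add: apolar_sq_on_def of_real_sum complex_norm_square[symmetric] mult.assoc)
  also have "\<dots> = (\<Sum>\<alpha>\<in>index_box D M. \<Sum>\<beta>\<in>index_box D M.
          of_real (1 / (mfact D \<alpha> * mfact D \<beta>)) * (gram_entry D M f g \<alpha> \<beta> * cnj (gram_entry D M f g \<alpha> \<beta>)))"
    unfolding apolar_sq_box_conv_expand gram_entries_expand by (rule sum_shift_quad_eq_diagonal[OF f g, symmetric])
  also have "\<dots> = complex_of_real (\<Sum>\<alpha>\<in>index_box D M. \<Sum>\<beta>\<in>index_box D M.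
                      (cmod (gram_entry D M f g \<alpha> \<beta>))\<^sup>2 / (mfact D \<alpha> * mfact D \<beta>))"
    by (simp add: of_real_sum complex_norm_square[symmetric])
  finally show ?thesis by (simp only: of_real_eq_iff)
qed

text \<open>On an antichain support only \<open>r = 0\<close> contributes to \<open>gram_entry D M f g \<alpha> \<beta>\<close> when \<open>f \<alpha> \<noteq> 0\<close>, so
  these Gram terms alone already give \<open>\<parallel>f\<parallel>\<^sup>2 \<parallel>g\<parallel>\<^sup>2\<close>.\<close>
lemma apolar_sq_mult_le_box_conv:
  assumes f: "\<And>x. f x \<noteq> 0 \<Longrightarrow> x \<in> index_box D M" and g: "\<And>x. g x \<noteq> 0 \<Longrightarrow> x \<in> index_box D M"
    and antichain: "\<And>x y. f x \<noteq> 0 \<Longrightarrow> f y \<noteq> 0 \<Longrightarrow> x \<le> y \<Longrightarrow> x = y"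
  shows "apolar_sq_on D (index_box D M) f * apolar_sq_on D (index_box D M) g
     \<le> apolar_sq_on D (index_box D (2 * M)) (box_conv D M f g)"
proof -
  let ?B = "index_box D M" and ?S = "{\<alpha> \<in> index_box D M. f \<alpha> \<noteq> 0}"
  have gram_diag: "gram_entry D M f g \<alpha> \<beta> = cnj (f \<alpha>) * g \<beta> * of_real (mfact D \<alpha> * mfact D \<beta>)"
    if "\<alpha> \<in> ?S" for \<alpha> \<beta>
  proof -
    have "f (\<alpha> + r) = 0" if "r \<noteq> 0" for r
    proof (rule ccontr)
      assume "f (\<alpha> + r) \<noteq> 0"
      then have "\<alpha> = \<alpha> + r" using antichain[of \<alpha> "\<alpha> + r"] \<open>\<alpha> \<in> ?S\<close> by (simp add: le_fun_def)
      with \<open>r \<noteq> 0\<close> show False by (simp add: fun_eq_iff)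
    qed
    then have "gram_entry D M f g \<alpha> \<beta> = (\<Sum>r\<in>{0}. cnj (f (\<alpha> + r)) * g (\<beta> + r) *
       of_real (mfact D (\<alpha> + r) * mfact D (\<beta> + r) / mfact D r))"
      unfolding gram_entry_def by (intro sum.mono_neutral_right) auto
    then show ?thesis by simp
  qed
  have "apolar_sq_on D ?B f * apolar_sq_on D ?B g
      = (\<Sum>\<alpha>\<in>?S. \<Sum>\<beta>\<in>?B. mfact D \<alpha> * (cmod (f \<alpha>))\<^sup>2 * (mfact D \<beta> * (cmod (g \<beta>))\<^sup>2))"
    unfolding apolar_sq_on_def sum_product[symmetric] by (simp add: sum.mono_neutral_right[of ?B ?S])
  also have "\<dots> = (\<Sum>\<alpha>\<in>?S. \<Sum>\<beta>\<in>?B. (cmod (gram_entry D M f g \<alpha> \<beta>))\<^sup>2 / (mfact D \<alpha> * mfact D \<beta>))"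
    using mfact_pos[of D]
    by (intro sum.cong refl) (simp add: gram_diag norm_mult power_mult_distrib power2_eq_square field_simps)
  also have "\<dots> \<le> (\<Sum>\<alpha>\<in>?B. \<Sum>\<beta>\<in>?B. (cmod (gram_entry D M f g \<alpha> \<beta>))\<^sup>2 / (mfact D \<alpha> * mfact D \<beta>))"
    using mfact_pos[of D] by (intro sum_mono2 sum_nonneg divide_nonneg_pos mult_pos_pos) auto
  also have "\<dots> = apolar_sq_on D (index_box D (2 * M)) (box_conv D M f g)"
    by (rule apolar_sq_box_conv_eq_gram[OF f g, symmetric])
  finally show ?thesis .
qed

lemma lookup_times_eq_sum_keys:
  fixes P Q :: mpoly_c
  shows "Poly_Mapping.lookup (P * Q) \<mu> = (\<Sum>\<alpha>\<in>Poly_Mapping.keys P. \<Sum>\<beta>\<in>Poly_Mapping.keys Q.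
           if \<alpha> + \<beta> = \<mu> then Poly_Mapping.lookup P \<alpha> * Poly_Mapping.lookup Q \<beta> else 0)"
proof -
  have inner: "(\<Sum>q. Poly_Mapping.lookup Q q when \<mu> = l + q)
      = (\<Sum>\<beta>\<in>Poly_Mapping.keys Q. if l + \<beta> = \<mu> then Poly_Mapping.lookup Q \<beta> else 0)" for l
    by (subst Sum_any.expand_superset[of "Poly_Mapping.keys Q"]) (auto simp: in_keys_iff intro!: sum.cong)
  have "Poly_Mapping.lookup (P * Q) \<mu> = (\<Sum>l. Poly_Mapping.lookup P l *
          (\<Sum>\<beta>\<in>Poly_Mapping.keys Q. if l + \<beta> = \<mu> then Poly_Mapping.lookup Q \<beta> else 0))"
    by (simp add: lookup_mult inner)
  also have "\<dots> = (\<Sum>l\<in>Poly_Mapping.keys P. Poly_Mapping.lookup P l *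
          (\<Sum>\<beta>\<in>Poly_Mapping.keys Q. if l + \<beta> = \<mu> then Poly_Mapping.lookup Q \<beta> else 0))"
    by (subst Sum_any.expand_superset[of "Poly_Mapping.keys P"]) (auto simp: in_keys_iff)
  finally show ?thesis by (simp add: sum_distrib_left if_distrib cong: if_cong)
qed

lemma mi_deg_eq_sum: "Poly_Mapping.keys \<alpha> \<subseteq> {..<d} \<Longrightarrow> mi_deg \<alpha> = (\<Sum>i<d. Poly_Mapping.lookup \<alpha> i)"
  unfolding mi_deg_def by (intro sum.mono_neutral_left) (auto simp: in_keys_iff)

lemma mi_fact_eq_prod: "Poly_Mapping.keys \<alpha> \<subseteq> {..<d} \<Longrightarrow> real (mi_fact \<alpha>) = (\<Prod>i<d. fact (Poly_Mapping.lookup \<alpha> i))"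
  unfolding mi_fact_def of_nat_prod of_nat_fact by (intro prod.mono_neutral_left) (auto simp: in_keys_iff)

lemma lookup_le_mi_deg: "Poly_Mapping.lookup \<alpha> i \<le> mi_deg \<alpha>"
proof (cases "i \<in> Poly_Mapping.keys \<alpha>")
  case True
  then show ?thesis unfolding mi_deg_def by (intro member_le_sum) auto
qed (simp add: in_keys_iff)

lemma mi_deg_add: "mi_deg (\<alpha> + \<beta>) = mi_deg \<alpha> + mi_deg \<beta>"
proof -
  let ?K = "Poly_Mapping.keys \<alpha> \<union> Poly_Mapping.keys \<beta>"
  have "mi_deg \<gamma> = (\<Sum>i\<in>?K. Poly_Mapping.lookup \<gamma> i)" if "Poly_Mapping.keys \<gamma> \<subseteq> ?K" for \<gamma>
    unfolding mi_deg_def using that by (intro sum.mono_neutral_left) (auto simp: in_keys_iff)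
  then show ?thesis using keys_add[of \<alpha> \<beta>] by (simp add: lookup_add sum.distrib)
qed

lemma Re_apolar_inner_self:
  "Re (apolar_inner P P) = (\<Sum>\<alpha>\<in>Poly_Mapping.keys P. real (mi_fact \<alpha>) * (cmod (Poly_Mapping.lookup P \<alpha>))\<^sup>2)"
proof -
  have "apolar_inner P P = (\<Sum>\<alpha>\<in>Poly_Mapping.keys P. of_real (real (mi_fact \<alpha>) * (cmod (Poly_Mapping.lookup P \<alpha>))\<^sup>2))"
    unfolding apolar_inner_def by (simp add: mult.assoc complex_norm_square[symmetric])
  then show ?thesis by (simp only: Re_sum Re_complex_of_real)
qed

lemma Re_apolar_inner_self_nonneg: "Re (apolar_inner P P) \<ge> 0"
  unfolding Re_apolar_inner_self by (intro sum_nonneg) auto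

definition parity_form :: "nat \<Rightarrow> nat \<Rightarrow> mpoly_c \<Rightarrow> bool" where
  "parity_form d m P \<longleftrightarrow> (\<forall>\<alpha>\<in>Poly_Mapping.keys P.
      Poly_Mapping.keys \<alpha> \<subseteq> {..<d} \<and> mi_deg \<alpha> \<le> m \<and> even (m - mi_deg \<alpha>))"

lemma even_form_imp_parity_form:
  assumes "even m" "even_form d m P"
  shows "parity_form d m P"
  using assms unfolding even_form_def parity_form_def mi_deg_def by (auto intro!: dvd_sum)

text \<open>Coordinate \<open>d\<close> carries the exponent of \<open>w\<^sup>2\<close>, where \<open>w\<close> is the homogenising variable.\<close>
definition homog_index :: "nat \<Rightarrow> nat \<Rightarrow> (nat \<Rightarrow>\<^sub>0 nat) \<Rightarrow> mindex" where
  "homog_index d m \<alpha> = (Poly_Mapping.lookup \<alpha>)(d := (m - mi_deg \<alpha>) div 2)"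

definition homogenize :: "nat \<Rightarrow> nat \<Rightarrow> mpoly_c \<Rightarrow> mindex \<Rightarrow> complex" where
  "homogenize d m P x = (\<Sum>\<alpha>\<in>Poly_Mapping.keys P. if homog_index d m \<alpha> = x then Poly_Mapping.lookup P \<alpha> else 0)"

lemma inj_on_homog_index: "inj_on (homog_index d m) {\<alpha>. Poly_Mapping.keys \<alpha> \<subseteq> {..<d}}"
proof (rule inj_onI, rule poly_mapping_eqI)
  fix \<alpha> \<beta> i
  assume keys: "\<alpha> \<in> {\<alpha>. Poly_Mapping.keys \<alpha> \<subseteq> {..<d}}" "\<beta> \<in> {\<alpha>. Poly_Mapping.keys \<alpha> \<subseteq> {..<d}}"
    and eq: "homog_index d m \<alpha> = homog_index d m \<beta>"
  show "Poly_Mapping.lookup \<alpha> i = Poly_Mapping.lookup \<beta> i"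
  proof (cases "i = d")
    case True
    have "d \<notin> Poly_Mapping.keys \<alpha>" "d \<notin> Poly_Mapping.keys \<beta>" using keys by auto
    then show ?thesis using True by (simp add: in_keys_iff)
  qed (use fun_cong[OF eq, of i] in \<open>simp add: homog_index_def\<close>)
qed

lemma parity_form_keys: "parity_form d m P \<Longrightarrow> \<alpha> \<in> Poly_Mapping.keys P \<Longrightarrow> Poly_Mapping.keys \<alpha> \<subseteq> {..<d}"
  by (simp add: parity_form_def)

lemma inj_on_homog_index_keys: "parity_form d m P \<Longrightarrow> inj_on (homog_index d m') (Poly_Mapping.keys P)"
  by (rule inj_on_subset[OF inj_on_homog_index]) (auto dest: parity_form_keys)

lemma homogenize_homog_index:
  assumes "parity_form d m P" "\<alpha> \<in> Poly_Mapping.keys P"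
  shows "homogenize d m P (homog_index d m \<alpha>) = Poly_Mapping.lookup P \<alpha>"
proof -
  have "homogenize d m P (homog_index d m \<alpha>)
      = (\<Sum>\<beta>\<in>Poly_Mapping.keys P. if \<beta> = \<alpha> then Poly_Mapping.lookup P \<beta> else 0)"
    unfolding homogenize_def using inj_on_homog_index_keys[OF assms(1)] assms(2)
    by (intro sum.cong refl) (auto dest: inj_onD)
  then show ?thesis using assms(2) by simp
qed

lemma homogenize_nonzero_imp:
  assumes "homogenize d m P x \<noteq> 0"
  shows "\<exists>\<alpha>\<in>Poly_Mapping.keys P. x = homog_index d m \<alpha>"
proof (rule ccontr)
  assume "\<not> ?thesis"
  then have "homogenize d m P x = 0" unfolding homogenize_def by (intro sum.neutral) auto
  with assms show False by contradiction
qed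

lemma homog_index_in_index_box:
  assumes "parity_form d m P" "\<alpha> \<in> Poly_Mapping.keys P" "m \<le> M"
  shows "homog_index d m \<alpha> \<in> index_box (Suc d) M"
proof -
  have "Poly_Mapping.keys \<alpha> \<subseteq> {..<d}" "mi_deg \<alpha> \<le> m"
    using assms(1,2) by (auto simp: parity_form_def)
  then have "Poly_Mapping.lookup \<alpha> i \<le> M" for i
    using lookup_le_mi_deg[of \<alpha> i] \<open>m \<le> M\<close> by linarith
  moreover have "Poly_Mapping.lookup \<alpha> i = 0" if "i > d" for i
    using \<open>Poly_Mapping.keys \<alpha> \<subseteq> {..<d}\<close> that by (auto simp: in_keys_iff)
  moreover have "(m - mi_deg \<alpha>) div 2 \<le> M" using \<open>m \<le> M\<close> by linarith
  ultimately show ?thesis by (simp add: index_box_def homog_index_def)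
qed

lemma homog_index_weighted_degree:
  assumes "parity_form d m P" "\<alpha> \<in> Poly_Mapping.keys P"
  shows "(\<Sum>i<d. homog_index d m \<alpha> i) + 2 * homog_index d m \<alpha> d = m"
proof -
  have "(\<Sum>i<d. homog_index d m \<alpha> i) = mi_deg \<alpha>"
    unfolding mi_deg_eq_sum[OF parity_form_keys[OF assms]] homog_index_def by (intro sum.cong) auto
  then show ?thesis using assms by (auto simp: homog_index_def parity_form_def)
qed

lemma mfact_homog_index:
  assumes "Poly_Mapping.keys \<alpha> \<subseteq> {..<d}"
  shows "mfact (Suc d) (homog_index d m \<alpha>) = real (mi_fact \<alpha>) * fact ((m - mi_deg \<alpha>) div 2)"
proof -
  have "(\<Prod>i<d. fact (homog_index d m \<alpha> i)) = (real (mi_fact \<alpha>) :: real)"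
    unfolding mi_fact_eq_prod[OF assms] homog_index_def by (intro prod.cong) auto
  then show ?thesis by (simp add: mfact_def homog_index_def)
qed

lemma homogenize_antichain:
  assumes P: "parity_form d m P"
    and nonzero: "homogenize d m P x \<noteq> 0" "homogenize d m P y \<noteq> 0" and le: "x \<le> y"
  shows "x = y"
proof -
  obtain \<alpha> \<beta> where \<alpha>: "\<alpha> \<in> Poly_Mapping.keys P" "x = homog_index d m \<alpha>"
    and \<beta>: "\<beta> \<in> Poly_Mapping.keys P" "y = homog_index d m \<beta>"
    using homogenize_nonzero_imp[OF nonzero(1)] homogenize_nonzero_imp[OF nonzero(2)] by blast
  have le_i: "x i \<le> y i" for i using le by (simp add: le_fun_def)
  have sums: "(\<Sum>i<d. x i) + 2 * x d = m" "(\<Sum>i<d. y i) + 2 * y d = m"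
    using homog_index_weighted_degree[OF P] \<alpha> \<beta> by auto
  moreover have "(\<Sum>i<d. x i) \<le> (\<Sum>i<d. y i)" using le_i by (intro sum_mono)
  ultimately have d: "x d = y d" and sum_eq: "(\<Sum>i<d. x i) = (\<Sum>i<d. y i)" using le_i[of d] by linarith+
  have "x i = y i" if "i < d" for i
  proof (rule ccontr)
    assume "x i \<noteq> y i"
    then have "x i < y i" using le_i[of i] by simp
    then have "(\<Sum>i<d. x i) < (\<Sum>i<d. y i)"
      using that le_i by (intro sum_strict_mono_ex1) auto
    with sum_eq show False by simp
  qed
  moreover have "x i = y i" if "i > d" for i
    using homog_index_in_index_box[OF P _ order.refl] \<alpha> \<beta> that by (auto simp: index_box_def)
  ultimately show "x = y" using d by (metis ext linorder_neqE_nat)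
qed

lemma sum_index_box_homogenize:
  assumes P: "parity_form d m P" and "m \<le> M"
    and vanish: "\<And>x. homogenize d m P x = 0 \<Longrightarrow> \<phi> x = 0"
  shows "(\<Sum>x\<in>index_box (Suc d) M. \<phi> x) = (\<Sum>\<alpha>\<in>Poly_Mapping.keys P. \<phi> (homog_index d m \<alpha>))"
proof -
  have "(\<Sum>x\<in>index_box (Suc d) M. \<phi> x) = (\<Sum>x\<in>homog_index d m ` Poly_Mapping.keys P. \<phi> x)"
  proof (rule sum.mono_neutral_right)
    show "homog_index d m ` Poly_Mapping.keys P \<subseteq> index_box (Suc d) M"
      using homog_index_in_index_box[OF P _ \<open>m \<le> M\<close>] by auto
    show "\<forall>x\<in>index_box (Suc d) M - homog_index d m ` Poly_Mapping.keys P. \<phi> x = 0"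
      using homogenize_nonzero_imp[of d m P] vanish by blast
  qed simp
  also have "\<dots> = (\<Sum>\<alpha>\<in>Poly_Mapping.keys P. \<phi> (homog_index d m \<alpha>))"
    by (rule sum.reindex[OF inj_on_homog_index_keys[OF P], unfolded comp_def])
  finally show ?thesis .
qed

lemma Re_apolar_inner_le_apolar_sq_homogenize:
  assumes P: "parity_form d m P" and "m \<le> M"
  shows "Re (apolar_inner P P) \<le> apolar_sq_on (Suc d) (index_box (Suc d) M) (homogenize d m P)"
proof -
  have "Re (apolar_inner P P) \<le> (\<Sum>\<alpha>\<in>Poly_Mapping.keys P.
          mfact (Suc d) (homog_index d m \<alpha>) * (cmod (Poly_Mapping.lookup P \<alpha>))\<^sup>2)"
    unfolding Re_apolar_inner_self
  proof (intro sum_mono mult_right_mono)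
    fix \<alpha> assume "\<alpha> \<in> Poly_Mapping.keys P"
    then have "Poly_Mapping.keys \<alpha> \<subseteq> {..<d}" by (rule parity_form_keys[OF P])
    then have "mfact (Suc d) (homog_index d m \<alpha>) = real (mi_fact \<alpha>) * fact ((m - mi_deg \<alpha>) div 2)"
      by (rule mfact_homog_index)
    then show "real (mi_fact \<alpha>) \<le> mfact (Suc d) (homog_index d m \<alpha>)"
      using fact_ge_1[of "(m - mi_deg \<alpha>) div 2", where 'a = real] by (simp add: mult_le_cancel_left1)
  qed simp
  also have "\<dots> = apolar_sq_on (Suc d) (index_box (Suc d) M) (homogenize d m P)"
    unfolding apolar_sq_on_def by (subst sum_index_box_homogenize[OF P \<open>m \<le> M\<close>]) (auto simp: homogenize_homog_index[OF P])
  finally show ?thesis .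
qed

lemma homog_index_add:
  assumes P: "parity_form d m P" "\<alpha> \<in> Poly_Mapping.keys P" and Q: "parity_form d n Q" "\<beta> \<in> Poly_Mapping.keys Q"
  shows "homog_index d m \<alpha> + homog_index d n \<beta> = homog_index d (m + n) (\<alpha> + \<beta>)"
proof -
  have "mi_deg \<alpha> \<le> m" "even (m - mi_deg \<alpha>)" "mi_deg \<beta> \<le> n" "even (n - mi_deg \<beta>)"
    using P Q by (auto simp: parity_form_def)
  then have "(m - mi_deg \<alpha>) div 2 + (n - mi_deg \<beta>) div 2 = (m + n - (mi_deg \<alpha> + mi_deg \<beta>)) div 2"
    by (elim evenE) auto
  then show ?thesis by (simp add: fun_eq_iff homog_index_def lookup_add mi_deg_add)
qed

definition keys_sums :: "mpoly_c \<Rightarrow> mpoly_c \<Rightarrow> (nat \<Rightarrow>\<^sub>0 nat) set" where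
  "keys_sums P Q = (\<lambda>(\<alpha>, \<beta>). \<alpha> + \<beta>) ` (Poly_Mapping.keys P \<times> Poly_Mapping.keys Q)"

lemma finite_keys_sums [simp]: "finite (keys_sums P Q)"
  by (simp add: keys_sums_def)

lemma keys_times_subset_keys_sums: "Poly_Mapping.keys (P * Q) \<subseteq> keys_sums P Q"
  using keys_mult[of P Q] unfolding keys_sums_def by auto

lemma keys_sums_keys:
  assumes "parity_form d m P" "parity_form d n Q" "\<mu> \<in> keys_sums P Q"
  shows "Poly_Mapping.keys \<mu> \<subseteq> {..<d}"
  using assms keys_add parity_form_keys unfolding keys_sums_def by fastforce

lemma box_conv_homogenize:
  assumes P: "parity_form d m P" and Q: "parity_form d n Q" and "m \<le> M" "n \<le> M"
  shows "box_conv (Suc d) M (homogenize d m P) (homogenize d n Q) \<gamma>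
       = (\<Sum>\<mu>\<in>keys_sums P Q. if homog_index d (m + n) \<mu> = \<gamma> then Poly_Mapping.lookup (P * Q) \<mu> else 0)"
proof -
  let ?pairs = "Poly_Mapping.keys P \<times> Poly_Mapping.keys Q"
  let ?c = "\<lambda>(\<alpha>, \<beta>). if homog_index d (m + n) (\<alpha> + \<beta>) = \<gamma>
                        then Poly_Mapping.lookup P \<alpha> * Poly_Mapping.lookup Q \<beta> else 0"
  have "box_conv (Suc d) M (homogenize d m P) (homogenize d n Q) \<gamma>
      = (\<Sum>\<alpha>\<in>Poly_Mapping.keys P. \<Sum>b\<in>index_box (Suc d) M. if homog_index d m \<alpha> + b = \<gamma>
           then homogenize d m P (homog_index d m \<alpha>) * homogenize d n Q b else 0)"
    unfolding box_conv_def by (rule sum_index_box_homogenize[OF P \<open>m \<le> M\<close>]) (auto intro!: sum.neutral)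
  also have "\<dots> = (\<Sum>\<alpha>\<in>Poly_Mapping.keys P. \<Sum>\<beta>\<in>Poly_Mapping.keys Q. if homog_index d m \<alpha> + homog_index d n \<beta> = \<gamma>
           then homogenize d m P (homog_index d m \<alpha>) * homogenize d n Q (homog_index d n \<beta>) else 0)"
    by (intro sum.cong refl sum_index_box_homogenize[OF Q \<open>n \<le> M\<close>]) auto
  also have "\<dots> = (\<Sum>t\<in>?pairs. ?c t)"
    unfolding sum.cartesian_product
    by (intro sum.cong refl) (auto simp: homogenize_homog_index P Q homog_index_add[OF P _ Q])
  also have "\<dots> = (\<Sum>\<mu>\<in>keys_sums P Q. \<Sum>t\<in>{t \<in> ?pairs. fst t + snd t = \<mu>}. ?c t)"
    by (rule sum.group[symmetric]) (auto simp: keys_sums_def)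
  also have "\<dots> = (\<Sum>\<mu>\<in>keys_sums P Q. if homog_index d (m + n) \<mu> = \<gamma> then Poly_Mapping.lookup (P * Q) \<mu> else 0)"
  proof (intro sum.cong refl)
    fix \<mu>
    have "Poly_Mapping.lookup (P * Q) \<mu>
        = (\<Sum>t\<in>{t \<in> ?pairs. fst t + snd t = \<mu>}. Poly_Mapping.lookup P (fst t) * Poly_Mapping.lookup Q (snd t))"
      unfolding lookup_times_eq_sum_keys sum.cartesian_product by (simp add: sum.inter_filter case_prod_beta)
    then show "(\<Sum>t\<in>{t \<in> ?pairs. fst t + snd t = \<mu>}. ?c t)
        = (if homog_index d (m + n) \<mu> = \<gamma> then Poly_Mapping.lookup (P * Q) \<mu> else 0)"
      by (auto simp: case_prod_beta intro!: sum.neutral sum.cong)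
  qed
  finally show ?thesis .
qed

lemma inj_on_homog_index_keys_sums:
  "parity_form d m P \<Longrightarrow> parity_form d n Q \<Longrightarrow> inj_on (homog_index d m') (keys_sums P Q)"
  by (rule inj_on_subset[OF inj_on_homog_index]) (auto dest: keys_sums_keys)

lemma box_conv_homogenize_homog_index:
  assumes P: "parity_form d m P" and Q: "parity_form d n Q" and "m \<le> M" "n \<le> M" and "\<mu> \<in> keys_sums P Q"
  shows "box_conv (Suc d) M (homogenize d m P) (homogenize d n Q) (homog_index d (m + n) \<mu>)
       = Poly_Mapping.lookup (P * Q) \<mu>"
proof -
  have "box_conv (Suc d) M (homogenize d m P) (homogenize d n Q) (homog_index d (m + n) \<mu>)
      = (\<Sum>\<mu>'\<in>keys_sums P Q. if \<mu>' = \<mu> then Poly_Mapping.lookup (P * Q) \<mu>' else 0)"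
    unfolding box_conv_homogenize[OF P Q \<open>m \<le> M\<close> \<open>n \<le> M\<close>]
    using inj_onD[OF inj_on_homog_index_keys_sums[OF P Q] _ _ \<open>\<mu> \<in> keys_sums P Q\<close>]
    by (intro sum.cong refl) auto
  then show ?thesis using \<open>\<mu> \<in> keys_sums P Q\<close> by simp
qed

lemma box_conv_homogenize_eq_0:
  assumes "parity_form d m P" "parity_form d n Q" "m \<le> M" "n \<le> M"
    and "\<gamma> \<notin> homog_index d (m + n) ` keys_sums P Q"
  shows "box_conv (Suc d) M (homogenize d m P) (homogenize d n Q) \<gamma> = 0"
  unfolding box_conv_homogenize[OF assms(1-4)] using assms(5) by (intro sum.neutral) auto

lemma homog_index_keys_sums_subset:
  assumes P: "parity_form d m P" and Q: "parity_form d n Q" and "m \<le> M" "n \<le> M"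
  shows "homog_index d (m + n) ` keys_sums P Q \<subseteq> index_box (Suc d) (2 * M)"
proof
  fix \<gamma> assume "\<gamma> \<in> homog_index d (m + n) ` keys_sums P Q"
  then obtain \<alpha> \<beta> where "\<alpha> \<in> Poly_Mapping.keys P" "\<beta> \<in> Poly_Mapping.keys Q" "\<gamma> = homog_index d (m + n) (\<alpha> + \<beta>)"
    unfolding keys_sums_def by auto
  then show "\<gamma> \<in> index_box (Suc d) (2 * M)"
    using homog_index_add[OF P _ Q] add_in_index_box homog_index_in_index_box[OF P _ \<open>m \<le> M\<close>]
      homog_index_in_index_box[OF Q _ \<open>n \<le> M\<close>] by metis
qed

text \<open>The factor \<open>((m + n)/2)!\<close> bounds the factorial of the homogenising exponent, which the apolar
  norm of \<open>P Q\<close> does not see.\<close>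
lemma apolar_sq_box_conv_homogenize_le:
  assumes P: "parity_form d m P" and Q: "parity_form d n Q" and "m \<le> M" "n \<le> M"
  shows "apolar_sq_on (Suc d) (index_box (Suc d) (2 * M)) (box_conv (Suc d) M (homogenize d m P) (homogenize d n Q))
     \<le> fact ((m + n) div 2) * Re (apolar_inner (P * Q) (P * Q))"
proof -
  let ?h = "homog_index d (m + n)" and ?K = "keys_sums P Q"
  let ?c = "box_conv (Suc d) M (homogenize d m P) (homogenize d n Q)"
  have "apolar_sq_on (Suc d) (index_box (Suc d) (2 * M)) ?c = (\<Sum>\<gamma>\<in>?h ` ?K. mfact (Suc d) \<gamma> * (cmod (?c \<gamma>))\<^sup>2)"
    unfolding apolar_sq_on_def using homog_index_keys_sums_subset[OF assms] box_conv_homogenize_eq_0[OF assms]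
    by (intro sum.mono_neutral_right) auto
  also have "\<dots> = (\<Sum>\<mu>\<in>?K. mfact (Suc d) (?h \<mu>) * (cmod (Poly_Mapping.lookup (P * Q) \<mu>))\<^sup>2)"
    by (simp add: sum.reindex[OF inj_on_homog_index_keys_sums[OF P Q]] box_conv_homogenize_homog_index[OF assms])
  also have "\<dots> \<le> (\<Sum>\<mu>\<in>?K. fact ((m + n) div 2) * (real (mi_fact \<mu>) * (cmod (Poly_Mapping.lookup (P * Q) \<mu>))\<^sup>2))"
  proof (intro sum_mono)
    fix \<mu> assume \<mu>: "\<mu> \<in> ?K"
    have "mfact (Suc d) (?h \<mu>) = real (mi_fact \<mu>) * fact ((m + n - mi_deg \<mu>) div 2)"
      by (rule mfact_homog_index[OF keys_sums_keys[OF P Q \<mu>]])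
    also have "\<dots> \<le> real (mi_fact \<mu>) * fact ((m + n) div 2)"
      by (intro mult_left_mono fact_mono div_le_mono) auto
    finally show "mfact (Suc d) (?h \<mu>) * (cmod (Poly_Mapping.lookup (P * Q) \<mu>))\<^sup>2
        \<le> fact ((m + n) div 2) * (real (mi_fact \<mu>) * (cmod (Poly_Mapping.lookup (P * Q) \<mu>))\<^sup>2)"
      by (subst mult.left_commute, subst mult.assoc[symmetric]) (rule mult_right_mono, simp_all)
  qed
  also have "\<dots> = fact ((m + n) div 2) * Re (apolar_inner (P * Q) (P * Q))"
    unfolding Re_apolar_inner_self sum_distrib_left[symmetric]
    using keys_times_subset_keys_sums by (intro arg_cong[where f = "(*) _"] sum.mono_neutral_right) (auto simp: in_keys_iff)
  finally show ?thesis .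
qed

lemma Re_apolar_inner_mult_le:
  assumes P: "parity_form d m P" and Q: "parity_form d n Q"
  shows "Re (apolar_inner P P) * Re (apolar_inner Q Q) \<le> fact ((m + n) div 2) * Re (apolar_inner (P * Q) (P * Q))"
proof -
  define M where "M = max m n"
  then have "m \<le> M" "n \<le> M" by auto
  let ?F = "homogenize d m P" and ?G = "homogenize d n Q" and ?B = "index_box (Suc d) M"
  have "Re (apolar_inner P P) * Re (apolar_inner Q Q) \<le> apolar_sq_on (Suc d) ?B ?F * apolar_sq_on (Suc d) ?B ?G"
    using Re_apolar_inner_le_apolar_sq_homogenize[OF P \<open>m \<le> M\<close>] Re_apolar_inner_le_apolar_sq_homogenize[OF Q \<open>n \<le> M\<close>]
    by (intro mult_mono Re_apolar_inner_self_nonneg apolar_sq_on_nonneg)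
  also have "\<dots> \<le> apolar_sq_on (Suc d) (index_box (Suc d) (2 * M)) (box_conv (Suc d) M ?F ?G)"
  proof (rule apolar_sq_mult_le_box_conv)
    show "x \<in> ?B" if "?F x \<noteq> 0" for x
      using homogenize_nonzero_imp[OF that] homog_index_in_index_box[OF P _ \<open>m \<le> M\<close>] by blast
    show "x \<in> ?B" if "?G x \<noteq> 0" for x
      using homogenize_nonzero_imp[OF that] homog_index_in_index_box[OF Q _ \<open>n \<le> M\<close>] by blast
  qed (rule homogenize_antichain[OF P])
  also have "\<dots> \<le> fact ((m + n) div 2) * Re (apolar_inner (P * Q) (P * Q))"
    by (rule apolar_sq_box_conv_homogenize_le[OF P Q \<open>m \<le> M\<close> \<open>n \<le> M\<close>])
  finally show ?thesis .
qed

lemma apolar_norm_nonneg: "apolar_norm P \<ge> 0"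
  by (simp add: apolar_norm_def Re_apolar_inner_self_nonneg)

lemma apolar_norm_power2: "(apolar_norm P)\<^sup>2 = Re (apolar_inner P P)"
  by (simp add: apolar_norm_def Re_apolar_inner_self_nonneg)

theorem theorem4p2:
  fixes d m n :: nat and P Q :: mpoly_c
  assumes "m > 0" "n > 0" "even m" "even n"
    and "P \<noteq> 0" "Q \<noteq> 0"
    and "even_form d m P" "even_form d n Q"
  shows "real (fact ((m + n) div 2)) * apolar_norm (P * Q) \<ge> apolar_norm P * apolar_norm Q"
proof -
  define k :: real where "k = fact ((m + n) div 2)"
  have "k \<ge> 1" unfolding k_def by (rule fact_ge_1)
  have "(apolar_norm P * apolar_norm Q)\<^sup>2 \<le> k * (apolar_norm (P * Q))\<^sup>2"
    unfolding power_mult_distrib apolar_norm_power2 k_def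
    by (rule Re_apolar_inner_mult_le; rule even_form_imp_parity_form) (use assms in simp_all)
  also have "\<dots> \<le> k\<^sup>2 * (apolar_norm (P * Q))\<^sup>2"
    using \<open>k \<ge> 1\<close> by (intro mult_right_mono) (simp_all add: power2_eq_square)
  finally have "(apolar_norm P * apolar_norm Q)\<^sup>2 \<le> (k * apolar_norm (P * Q))\<^sup>2"
    by (simp only: power_mult_distrib)
  then have "apolar_norm P * apolar_norm Q \<le> k * apolar_norm (P * Q)"
    by (rule power2_le_imp_le) (use \<open>k \<ge> 1\<close> apolar_norm_nonneg[of "P * Q"] in simp)
  then show ?thesis by (simp add: k_def)
qed

end
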